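(* For integers $d \ge 0$ and $n \ge 0$, $$\mathcal{G}_{d,n} = \sum_{k=0}^d \binom{d}{k} \mathcal{I}_{k,n},$$ where $\mathcal{I}_{0,n} = \delta_{0,n}$ (equal to $1$ if $n=0$ and $0$ otherwise).
   Context: Let $X^{(1)}, X^{(2)}, \dots$ be i.i.d. random vectors uniformly distributed on $[0,1)^d$. For $x,y\in\mathbb{R}^d$, $x \prec y$ means $x_j<y_j$ for all $j$ and $x \le y$ means $x_j \le y_j$ for all $j$. After $n$ observations, the record-setting region is $S_n := \{x \in [0,1)^d : x \not\prec X^{(i)} \text{ for all } i \in [n]\}$ (with $S_0 = [0,1)^d$); its generators are the minimal elements of $S_n$ with respect to $\le$; a generator is interior if all of its coordinates are nonzero. $\mathcal{G}_{d,n}$ denotes the expected number of generators of $S_n$ and $\mathcal{I}_{d,n}$ the expected number of interior generators of $S_n$, for $d$-dimensional observations; $\mathcal{I}_{k,n}$ is the same quantity for $k$-dimensional observations. *)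

theory Defs
  imports "HOL-Probability.Probability"
begin

text \<open>Points of [0,1)^d are represented as extensional functions on {0..<d}
  (elements of PiE {0..<d} (\<lambda>_. {0..<1})). An observation sequence
  X^(1),...,X^(n) is a function X on {0..<n} (index i stands for X^(i+1)).\<close>

definition unit_cube :: "nat \<Rightarrow> (nat \<Rightarrow> real) set" where
  "unit_cube d = PiE {0..<d} (\<lambda>_. {0..<1})"

definition strict_dom :: "nat \<Rightarrow> (nat \<Rightarrow> real) \<Rightarrow> (nat \<Rightarrow> real) \<Rightarrow> bool" where
  "strict_dom d x y \<longleftrightarrow> (\<forall>j<d. x j < y j)"

definition weak_dom :: "nat \<Rightarrow> (nat \<Rightarrow> real) \<Rightarrow> (nat \<Rightarrow> real) \<Rightarrow> bool" where
  "weak_dom d x y \<longleftrightarrow> (\<forall>j<d. x j \<le> y j)"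

definition record_region :: "nat \<Rightarrow> nat \<Rightarrow> (nat \<Rightarrow> nat \<Rightarrow> real) \<Rightarrow> (nat \<Rightarrow> real) set" where
  "record_region d n X = {x \<in> unit_cube d. \<forall>i<n. \<not> strict_dom d x (X i)}"

definition generators :: "nat \<Rightarrow> nat \<Rightarrow> (nat \<Rightarrow> nat \<Rightarrow> real) \<Rightarrow> (nat \<Rightarrow> real) set" where
  "generators d n X = {x \<in> record_region d n X.
      \<forall>y \<in> record_region d n X. weak_dom d y x \<longrightarrow> y = x}"

definition interior_generators :: "nat \<Rightarrow> nat \<Rightarrow> (nat \<Rightarrow> nat \<Rightarrow> real) \<Rightarrow> (nat \<Rightarrow> real) set" where
  "interior_generators d n X = {x \<in> generators d n X. \<forall>j<d. x j \<noteq> 0}"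

definition obs_measure :: "nat \<Rightarrow> (nat \<Rightarrow> real) measure" where
  "obs_measure d = PiM {0..<d} (\<lambda>_. uniform_measure lborel {0..<1::real})"

definition sample_measure :: "nat \<Rightarrow> nat \<Rightarrow> (nat \<Rightarrow> nat \<Rightarrow> real) measure" where
  "sample_measure d n = PiM {0..<n} (\<lambda>_. obs_measure d)"

definition expected_generators :: "nat \<Rightarrow> nat \<Rightarrow> real" where
  "expected_generators d n =
     (\<integral>X. real (card (generators d n X)) \<partial>sample_measure d n)"

definition expected_interior_generators :: "nat \<Rightarrow> nat \<Rightarrow> real" where
  "expected_interior_generators d n =
     (\<integral>X. real (card (interior_generators d n X)) \<partial>sample_measure d n)"

end

theory Submission
  imports Defs
begin

text \<open>Each nonzero coordinate of a generator is pinned to the same coordinate of an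
  observation, so grouping the generators by their support \<open>K = {j. x j \<noteq> 0}\<close> splits the
  count into classes indexed by subsets of the coordinates. Almost surely all observation
  coordinates are positive; then deleting the zero coordinates maps the generators with
  support \<open>K\<close> bijectively onto the interior generators of the observations projected onto
  the coordinates in \<open>K\<close>. The projected observations are again i.i.d. uniform on
  \<open>[0,1)^|K|\<close>, so the class of \<open>K\<close> contributes \<open>I_{|K|,n}\<close>, and counting supports by size
  gives the binomial coefficients.\<close>

lemma prob_space_uniform_unit_interval: "prob_space (uniform_measure lborel {0..<1::real})"
  by (rule prob_space_uniform_measure) auto

lemma prob_space_obs_measure: "prob_space (obs_measure d)"
  unfolding obs_measure_def by (intro prob_space_PiM prob_space_uniform_unit_interval)

lemma prob_space_sample_measure: "prob_space (sample_measure d n)"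
  unfolding sample_measure_def by (intro prob_space_PiM prob_space_obs_measure)

lemma measurable_sample_coordinate[measurable]:
  assumes "i \<in> {0..<n}" "j \<in> {0..<d}"
  shows "(\<lambda>X. X i j) \<in> borel_measurable (sample_measure d n)"
proof -
  have "(\<lambda>X. X i) \<in> sample_measure d n \<rightarrow>\<^sub>M obs_measure d"
    unfolding sample_measure_def using assms(1) by (rule measurable_component_singleton)
  moreover have "(\<lambda>x. x j) \<in> obs_measure d \<rightarrow>\<^sub>M uniform_measure lborel {0..<1::real}"
    unfolding obs_measure_def using assms(2) by (rule measurable_component_singleton)
  then have "(\<lambda>x. x j) \<in> borel_measurable (obs_measure d)"
    by (simp cong: measurable_cong_sets)
  ultimately show ?thesis
    by (rule measurable_compose)
qed

lemma AE_sample_positive: "AE X in sample_measure d n. \<forall>i<n. \<forall>j<d. 0 < X i j"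
proof -
  have "AE x in uniform_measure lborel {0..<1::real}. 0 < x"
    by (rule AE_uniform_measureI) (auto intro: AE_mp[OF AE_lborel_singleton[of 0]])
  then have "AE x in obs_measure d. 0 < x j" if "j < d" for j
    unfolding obs_measure_def using that
    by (intro AE_PiM_component prob_space_uniform_unit_interval) auto
  then have "AE X in sample_measure d n. 0 < X i j" if "i < n" "j < d" for i j
    unfolding sample_measure_def using that
    by (intro AE_PiM_component[where P="\<lambda>x. 0 < x j"] prob_space_obs_measure)
      (auto simp: sample_measure_def)
  then have "AE X in sample_measure d n. \<forall>i\<in>{..<n}. \<forall>j\<in>{..<d}. 0 < X i j"
    by (intro eventually_ball_finite ballI) auto
  then show ?thesis
    by (auto elim!: AE_mp)
qed

text \<open>A coordinate of a record-setting point that is not pinned by an observation can be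
  lowered to the largest coordinate below it among the observations that still constrain it.\<close>

lemma record_region_lower_coordinate:
  assumes x: "x \<in> record_region d n X" and j: "j < d" "x j \<noteq> 0"
    and unpinned: "\<not> (\<exists>i<n. x j = X i j \<and> (\<forall>l<d. l \<noteq> j \<longrightarrow> x l < X i l))"
  obtains y where "y \<in> record_region d n X" "weak_dom d y x" "y \<noteq> x"
proof -
  have xc: "x \<in> unit_cube d" and nd: "\<And>i. i < n \<Longrightarrow> \<not> strict_dom d x (X i)"
    using x by (auto simp: record_region_def)
  have xj: "0 \<le> x j" "x j < 1"
    using xc j by (auto simp: unit_cube_def PiE_iff)
  define T where "T = {i. i < n \<and> (\<forall>l<d. l \<noteq> j \<longrightarrow> x l < X i l)}"
  have T_below: "X i j < x j" if "i \<in> T" for i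
  proof -
    have "i < n" "\<forall>l<d. l \<noteq> j \<longrightarrow> x l < X i l" "x j \<noteq> X i j"
      using that unpinned by (auto simp: T_def)
    with nd[of i] j show ?thesis
      unfolding strict_dom_def by (metis linorder_neqE_linordered_idom not_less)
  qed
  define m where "m = Max (insert 0 ((\<lambda>i. X i j) ` T))"
  have "finite T" by (auto simp: T_def)
  then have m: "0 \<le> m" "m < x j" "\<And>i. i \<in> T \<Longrightarrow> X i j \<le> m"
    using T_below xj j by (auto simp: m_def)
  define y where "y = x(j := m)"
  have "y \<in> unit_cube d"
    using xc j m xj PiE_fun_upd[of m "\<lambda>_. {0..<1::real}" j x "{0..<d}"]
    by (simp add: y_def unit_cube_def insert_absorb)
  moreover have "\<not> strict_dom d y (X i)" if i: "i < n" for i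
  proof (cases "i \<in> T")
    case True
    then show ?thesis
      using m(3)[OF True] j unfolding strict_dom_def by (force simp: y_def not_less)
  next
    case False
    then obtain l where "l < d" "l \<noteq> j" "\<not> x l < X i l"
      using i by (auto simp: T_def)
    then show ?thesis by (auto simp: strict_dom_def y_def)
  qed
  ultimately have "y \<in> record_region d n X"
    by (simp add: record_region_def)
  moreover have "weak_dom d y x" "y \<noteq> x"
    using m(2) by (auto simp: weak_dom_def y_def fun_eq_iff)
  ultimately show ?thesis by (rule that)
qed

lemma record_region_pinned_minimal:
  assumes x: "x \<in> record_region d n X"
    and pinned: "\<forall>j<d. x j \<noteq> 0 \<longrightarrow> (\<exists>i<n. x j = X i j \<and> (\<forall>l<d. l \<noteq> j \<longrightarrow> x l < X i l))"
    and y: "y \<in> record_region d n X" "weak_dom d y x"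
  shows "y = x"
proof -
  have yc: "y \<in> unit_cube d" and xc: "x \<in> unit_cube d"
    using x y by (auto simp: record_region_def)
  show ?thesis
  proof (rule PiE_ext[OF yc[unfolded unit_cube_def] xc[unfolded unit_cube_def]])
    fix j assume "j \<in> {0..<d}"
    then have j: "j < d" by simp
    show "y j = x j"
    proof (rule ccontr)
      assume "y j \<noteq> x j"
      with y(2) j have lt: "y j < x j" by (auto simp: weak_dom_def)
      moreover have "0 \<le> y j" using yc j by (auto simp: unit_cube_def PiE_iff)
      ultimately obtain i where i: "i < n" "x j = X i j" "\<forall>l<d. l \<noteq> j \<longrightarrow> x l < X i l"
        using pinned j by force
      have "y l < X i l" if "l < d" for l
        using lt i y(2) that by (cases "l = j") (auto simp: weak_dom_def intro: le_less_trans)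
      then have "strict_dom d y (X i)" by (simp add: strict_dom_def)
      with y(1) i(1) show False by (auto simp: record_region_def)
    qed
  qed
qed

lemma generators_iff:
  "x \<in> generators d n X \<longleftrightarrow> x \<in> record_region d n X \<and>
     (\<forall>j<d. x j \<noteq> 0 \<longrightarrow> (\<exists>i<n. x j = X i j \<and> (\<forall>l<d. l \<noteq> j \<longrightarrow> x l < X i l)))"
  by (auto simp: generators_def intro: record_region_pinned_minimal
      elim: record_region_lower_coordinate)

definition generators_with_support ::
    "nat \<Rightarrow> nat \<Rightarrow> (nat \<Rightarrow> nat \<Rightarrow> real) \<Rightarrow> nat set \<Rightarrow> (nat \<Rightarrow> real) set" where
  "generators_with_support d n X K = {x \<in> generators d n X. \<forall>j<d. x j \<noteq> 0 \<longleftrightarrow> j \<in> K}"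

lemma mem_generators_with_support_iff:
  "x \<in> generators_with_support d n X K \<longleftrightarrow>
     x \<in> PiE {0..<d} (\<lambda>_. {0..<1}) \<and> (\<forall>i<n. \<exists>j<d. X i j \<le> x j) \<and>
     (\<forall>j<d. x j \<noteq> 0 \<longrightarrow> (\<exists>i<n. x j = X i j \<and> (\<forall>l<d. l \<noteq> j \<longrightarrow> x l < X i l))) \<and>
     (\<forall>j<d. x j \<noteq> 0 \<longleftrightarrow> j \<in> K)"
  unfolding generators_with_support_def mem_Collect_eq generators_iff record_region_def
    unit_cube_def strict_dom_def
  by (auto simp: not_less)

lemma interior_generators_eq_with_full_support:
  "interior_generators d n X = generators_with_support d n X {0..<d}"
  by (auto simp: generators_with_support_def interior_generators_def)

lemma card_generators_eq_sum_with_support: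
  assumes "finite (generators d n X)"
  shows "card (generators d n X) = (\<Sum>K\<in>Pow {0..<d}. card (generators_with_support d n X K))"
proof -
  let ?supp = "\<lambda>x. {j\<in>{0..<d}. x j \<noteq> 0}"
  have "generators_with_support d n X K = {x \<in> generators d n X. ?supp x = K}"
    if "K \<in> Pow {0..<d}" for K
    using that by (auto simp: generators_with_support_def subset_iff)
  then have "(\<Sum>K\<in>Pow {0..<d}. card (generators_with_support d n X K))
      = (\<Sum>K\<in>Pow {0..<d}. \<Sum>x\<in>{x \<in> generators d n X. ?supp x = K}. 1)"
    by (intro sum.cong) auto
  also have "\<dots> = (\<Sum>x\<in>generators d n X. 1)"
    using assms by (intro sum.group) auto
  finally show ?thesis by simp
qed

text \<open>Every coordinate of a generator is 0 or a coordinate of an observation, so a generator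
  is described by a choice of, for each coordinate, the observation that supplies it
  (\<open>None\<close> for 0).\<close>

definition choice_point ::
    "nat \<Rightarrow> (nat \<Rightarrow> nat \<Rightarrow> real) \<Rightarrow> (nat \<Rightarrow> nat option) \<Rightarrow> nat \<Rightarrow> real" where
  "choice_point d X c = (\<lambda>j\<in>{0..<d}. case c j of None \<Rightarrow> 0 | Some i \<Rightarrow> X i j)"

definition coordinate_choices :: "nat \<Rightarrow> nat \<Rightarrow> (nat \<Rightarrow> nat option) set" where
  "coordinate_choices d n = PiE {0..<d} (\<lambda>_. insert None (Some ` {0..<n}))"

lemma finite_coordinate_choices: "finite (coordinate_choices d n)"
  unfolding coordinate_choices_def by (intro finite_PiE) auto

lemma generators_subset_choice_points:
  "generators d n X \<subseteq> choice_point d X ` coordinate_choices d n"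
proof
  fix x assume x: "x \<in> generators d n X"
  then have xc: "x \<in> unit_cube d"
    by (auto simp: generators_def record_region_def)
  define src where "src j = (SOME i. i < n \<and> x j = X i j)" for j
  have src: "src j < n \<and> x j = X (src j) j" if "j < d" "x j \<noteq> 0" for j
    using someI_ex[of "\<lambda>i. i < n \<and> x j = X i j"] x that
    unfolding src_def generators_iff by blast
  define c where "c = (\<lambda>j\<in>{0..<d}. if x j = 0 then None else Some (src j))"
  have "c \<in> coordinate_choices d n"
    using src by (auto simp: c_def coordinate_choices_def PiE_iff)
  moreover have "choice_point d X c = x"
    using src xc by (auto simp: choice_point_def c_def unit_cube_def PiE_iff extensional_def)
  ultimately show "x \<in> choice_point d X ` coordinate_choices d n"
    by blast
qed

lemma finite_generators: "finite (generators d n X)"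
  by (rule finite_surj[OF finite_coordinate_choices generators_subset_choice_points])

lemma card_eq_sum_inverse_card_fibre:
  assumes "finite C" "A \<subseteq> f ` C"
  shows "real (card A) = (\<Sum>c\<in>C. if f c \<in> A then 1 / real (card {c'\<in>C. f c' = f c}) else 0)"
proof -
  let ?w = "\<lambda>c. if f c \<in> A then 1 / real (card {c'\<in>C. f c' = f c}) else 0"
  have "(\<Sum>c\<in>C. ?w c) = (\<Sum>y\<in>f ` C. \<Sum>c\<in>{c\<in>C. f c = y}. ?w c)"
    using assms(1) by (intro sum.group[symmetric]) auto
  also have "\<dots> = (\<Sum>y\<in>f ` C. if y \<in> A then 1 else 0)"
  proof (intro sum.cong refl)
    fix y assume "y \<in> f ` C"
    then have "card {c\<in>C. f c = y} \<noteq> 0"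
      using assms(1) by (auto simp: card_eq_0_iff)
    moreover have "(\<Sum>c\<in>{c\<in>C. f c = y}. ?w c)
        = (\<Sum>c\<in>{c\<in>C. f c = y}. if y \<in> A then 1 / real (card {c\<in>C. f c = y}) else 0)"
      by (intro sum.cong) auto
    ultimately show "(\<Sum>c\<in>{c\<in>C. f c = y}. ?w c) = (if y \<in> A then 1 else 0)"
      by simp
  qed
  also have "\<dots> = real (card A)"
    using assms by (simp add: sum.If_cases Int_absorb1)
  finally show ?thesis by simp
qed

lemma measurable_choice_point:
  assumes "c \<in> coordinate_choices d n" "j \<in> {0..<d}"
  shows "(\<lambda>X. choice_point d X c j) \<in> borel_measurable (sample_measure d n)"
proof (cases "c j")
  case (Some i)
  with assms have "i \<in> {0..<n}"
    by (force simp: coordinate_choices_def PiE_iff)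
  with Some assms(2) show ?thesis
    by (simp add: choice_point_def)
qed (use assms in \<open>simp add: choice_point_def\<close>)

lemma pred_real_compare:
  fixes f g :: "'a \<Rightarrow> real"
  assumes "f \<in> borel_measurable M" "g \<in> borel_measurable M"
  shows "Measurable.pred M (\<lambda>x. f x = g x)" "Measurable.pred M (\<lambda>x. f x \<le> g x)"
    "Measurable.pred M (\<lambda>x. f x < g x)"
  using assms unfolding pred_def
  by (auto intro: borel_measurable_eq borel_measurable_le borel_measurable_less)

lemma pred_choice_point_mem_generators_with_support:
  assumes c: "c \<in> coordinate_choices d n"
  shows "Measurable.pred (sample_measure d n)
    (\<lambda>X. choice_point d X c \<in> generators_with_support d n X K)"
proof -
  let ?p = "\<lambda>X. choice_point d X c"
  have "?p X \<in> extensional {0..<d}" for X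
    by (simp add: choice_point_def)
  then have "?p X \<in> generators_with_support d n X K \<longleftrightarrow>
      (\<forall>j\<in>{0..<d}. 0 \<le> ?p X j \<and> ?p X j < 1) \<and> (\<forall>i\<in>{0..<n}. \<exists>j\<in>{0..<d}. X i j \<le> ?p X j) \<and>
      (\<forall>j\<in>{0..<d}. ?p X j \<noteq> 0 \<longrightarrow>
         (\<exists>i\<in>{0..<n}. ?p X j = X i j \<and> (\<forall>l\<in>{0..<d}. l \<noteq> j \<longrightarrow> ?p X l < X i l))) \<and>
      (\<forall>j\<in>{0..<d}. ?p X j \<noteq> 0 \<longleftrightarrow> j \<in> K)" for X
    unfolding mem_generators_with_support_iff PiE_iff Ball_def Bex_def atLeastLessThan_iff
    by simp
  moreover have "Measurable.pred (sample_measure d n) (\<lambda>X. P)" for P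
    by (cases P) simp_all
  ultimately show ?thesis
    by (simp only:) (intro pred_intros_logic(2-4,6) pred_intros_finite(3,4)
        finite_atLeastLessThan pred_real_compare measurable_choice_point[OF c]
        measurable_sample_coordinate borel_measurable_const)
qed

lemma pred_choice_point_eq:
  assumes "c \<in> coordinate_choices d n" "c' \<in> coordinate_choices d n"
  shows "Measurable.pred (sample_measure d n) (\<lambda>X. choice_point d X c' = choice_point d X c)"
proof -
  have "choice_point d X c' = choice_point d X c \<longleftrightarrow>
      (\<forall>j\<in>{0..<d}. choice_point d X c' j = choice_point d X c j)" for X
    by (auto simp: choice_point_def fun_eq_iff)
  then show ?thesis
    by (simp only:) (intro pred_intros_finite(3) finite_atLeastLessThan pred_real_compare
        measurable_choice_point assms)
qed

lemma borel_measurable_card_generators_with_support: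
  "(\<lambda>X. real (card (generators_with_support d n X K))) \<in> borel_measurable (sample_measure d n)"
proof -
  let ?C = "coordinate_choices d n" and ?p = "\<lambda>X c. choice_point d X c"
  have "real (card (generators_with_support d n X K)) = (\<Sum>c\<in>?C.
      if ?p X c \<in> generators_with_support d n X K
      then 1 / (\<Sum>c'\<in>?C. if ?p X c' = ?p X c then 1 else 0) else 0)" for X
    using generators_subset_choice_points[of d n X] finite_coordinate_choices[of d n]
    by (subst card_eq_sum_inverse_card_fibre[where f="?p X"])
      (auto simp: generators_with_support_def sum.If_cases Int_def)
  then show ?thesis
    by (simp only:) (intro borel_measurable_sum measurable_If borel_measurable_divide
        borel_measurable_const pred_choice_point_mem_generators_with_support[unfolded pred_def]
        pred_choice_point_eq[unfolded pred_def])
qed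

lemma integrable_card_generators_with_support:
  "integrable (sample_measure d n) (\<lambda>X. real (card (generators_with_support d n X K)))"
proof -
  interpret prob_space "sample_measure d n"
    by (rule prob_space_sample_measure)
  have "generators_with_support d n X K \<subseteq> choice_point d X ` coordinate_choices d n" for X
    using generators_subset_choice_points[of d n X] by (auto simp: generators_with_support_def)
  then have "card (generators_with_support d n X K) \<le> card (coordinate_choices d n)" for X
    by (meson card_image_le card_mono finite_coordinate_choices finite_imageI order_trans)
  then show ?thesis
    by (intro integrable_const_bound[where B="real (card (coordinate_choices d n))"] AE_I2
        borel_measurable_card_generators_with_support) simp
qed

text \<open>Positivity of the observations makes the zero coordinates of a point irrelevant to
  whether it is dominated, which is why only the coordinates in \<open>K\<close> matter.\<close>

locale support_projection =
  fixes d n k :: nat and K :: "nat set" and e :: "nat \<Rightarrow> nat" and X Y :: "nat \<Rightarrow> nat \<Rightarrow> real"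
  assumes enumeration: "bij_betw e {0..<k} K"
    and support_subset: "K \<subseteq> {0..<d}"
    and positive: "\<forall>i<n. \<forall>j<d. 0 < X i j"
    and projection: "\<forall>i<n. \<forall>l<k. Y i l = X i (e l)"
begin

definition restrict_to_support :: "(nat \<Rightarrow> real) \<Rightarrow> nat \<Rightarrow> real" where
  "restrict_to_support x = (\<lambda>l\<in>{0..<k}. x (e l))"

definition extend_by_zero :: "(nat \<Rightarrow> real) \<Rightarrow> nat \<Rightarrow> real" where
  "extend_by_zero z = (\<lambda>j\<in>{0..<d}. if j \<in> K then z (the_inv_into {0..<k} e j) else 0)"

lemma enumeration_into: "l < k \<Longrightarrow> e l \<in> K \<and> e l < d"
  using bij_betw_apply[OF enumeration] support_subset by fastforce

lemma enumeration_inj: "l < k \<Longrightarrow> l' < k \<Longrightarrow> e l = e l' \<Longrightarrow> l = l'"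
  using enumeration by (auto simp: bij_betw_def inj_on_def)

lemma enumeration_onto:
  assumes "j \<in> K"
  obtains l where "l < k" "e l = j"
  using enumeration assms by (force simp: bij_betw_def)

lemma extend_by_zero_enumeration: "l < k \<Longrightarrow> extend_by_zero z (e l) = z l"
  using enumeration enumeration_into
  by (auto simp: extend_by_zero_def bij_betw_def the_inv_into_f_f)

lemma extend_by_zero_outside: "j < d \<Longrightarrow> j \<notin> K \<Longrightarrow> extend_by_zero z j = 0"
  by (simp add: extend_by_zero_def)

lemma extend_by_zero_cases:
  assumes "j < d"
  obtains (inside) l where "l < k" "e l = j" "j \<in> K" "extend_by_zero z j = z l"
  | (outside) "j \<notin> K" "extend_by_zero z j = 0"
  using assms enumeration_onto extend_by_zero_enumeration extend_by_zero_outside by metis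

lemma restrict_mem_interior_generators:
  assumes x: "x \<in> generators_with_support d n X K"
  shows "restrict_to_support x \<in> interior_generators k n Y"
proof -
  note x = x[unfolded mem_generators_with_support_iff]
  have "restrict_to_support x \<in> PiE {0..<k} (\<lambda>_. {0..<1})"
    using x enumeration_into by (auto simp: restrict_to_support_def PiE_iff)
  moreover have "\<exists>l<k. Y i l \<le> restrict_to_support x l" if i: "i < n" for i
  proof -
    obtain j where j: "j < d" "X i j \<le> x j"
      using x i by blast
    with positive i have "x j \<noteq> 0" by force
    with x j obtain l where "l < k" "e l = j"
      by (auto elim: enumeration_onto)
    with j i show ?thesis
      using projection by (auto simp: restrict_to_support_def)
  qed
  moreover have "\<exists>i<n. restrict_to_support x l = Y i l \<and>
      (\<forall>l'<k. l' \<noteq> l \<longrightarrow> restrict_to_support x l' < Y i l')" if l: "l < k" for l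
  proof -
    have "x (e l) \<noteq> 0"
      using x enumeration_into[OF l] by blast
    then obtain i where i: "i < n" "x (e l) = X i (e l)" "\<forall>j<d. j \<noteq> e l \<longrightarrow> x j < X i j"
      using x enumeration_into[OF l] by blast
    have "restrict_to_support x l' < Y i l'" if "l' < k" "l' \<noteq> l" for l'
      using that i l projection enumeration_into[of l'] enumeration_inj[of l' l]
      by (auto simp: restrict_to_support_def)
    then show ?thesis
      using i l projection by (auto simp: restrict_to_support_def)
  qed
  moreover have "restrict_to_support x l \<noteq> 0" if l: "l < k" for l
    using x l enumeration_into[OF l] by (auto simp: restrict_to_support_def)
  ultimately show ?thesis
    unfolding interior_generators_eq_with_full_support mem_generators_with_support_iff by auto
qed

lemma extend_mem_generators_with_support:
  assumes z: "z \<in> interior_generators k n Y"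
  shows "extend_by_zero z \<in> generators_with_support d n X K"
proof -
  note z = z[unfolded interior_generators_eq_with_full_support mem_generators_with_support_iff]
  have "extend_by_zero z j \<in> {0..<1}" if "j < d" for j
    using that z by (cases rule: extend_by_zero_cases[where z=z]) (auto simp: PiE_iff)
  then have "extend_by_zero z \<in> PiE {0..<d} (\<lambda>_. {0..<1})"
    by (auto simp: PiE_iff extend_by_zero_def)
  moreover have "\<exists>j<d. X i j \<le> extend_by_zero z j" if i: "i < n" for i
  proof -
    obtain l where "l < k" "Y i l \<le> z l"
      using z i by blast
    then show ?thesis
      using i projection enumeration_into extend_by_zero_enumeration by metis
  qed
  moreover have "\<exists>i<n. extend_by_zero z j = X i j \<and>
      (\<forall>j'<d. j' \<noteq> j \<longrightarrow> extend_by_zero z j' < X i j')"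
    if j: "j < d" "extend_by_zero z j \<noteq> 0" for j
  proof -
    have "j \<in> K"
      using j by (auto simp: extend_by_zero_def split: if_splits)
    then obtain l where l: "l < k" "e l = j"
      by (rule enumeration_onto)
    then obtain i where i: "i < n" "z l = Y i l" "\<forall>l'<k. l' \<noteq> l \<longrightarrow> z l' < Y i l'"
      using z by auto
    have "extend_by_zero z j' < X i j'" if j': "j' < d" "j' \<noteq> j" for j'
    proof (cases "j' \<in> K")
      case True
      then obtain l' where "l' < k" "e l' = j'"
        by (rule enumeration_onto)
      with i j' l projection show ?thesis
        by (auto simp: extend_by_zero_enumeration)
    next
      case False
      with j' i positive show ?thesis
        by (auto simp: extend_by_zero_def)
    qed
    then show ?thesis
      using i l projection by (auto simp: extend_by_zero_enumeration)
  qed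
  moreover have "extend_by_zero z j \<noteq> 0 \<longleftrightarrow> j \<in> K" if "j < d" for j
    using that z by (cases rule: extend_by_zero_cases[where z=z]) auto
  ultimately show ?thesis
    unfolding mem_generators_with_support_iff by blast
qed

lemma bij_betw_restrict_to_support:
  "bij_betw restrict_to_support (generators_with_support d n X K) (interior_generators k n Y)"
proof (rule bij_betw_byWitness[where f'=extend_by_zero])
  show "\<forall>x\<in>generators_with_support d n X K. extend_by_zero (restrict_to_support x) = x"
  proof
    fix x assume x: "x \<in> generators_with_support d n X K"
    show "extend_by_zero (restrict_to_support x) = x"
    proof
      fix j
      show "extend_by_zero (restrict_to_support x) j = x j"
      proof (cases "j < d \<and> j \<in> K")
        case True
        then obtain l where "l < k" "e l = j"
          by (auto elim: enumeration_onto)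
        then show ?thesis
          by (auto simp: extend_by_zero_enumeration restrict_to_support_def)
      next
        case False
        with x show ?thesis
          unfolding mem_generators_with_support_iff
          by (auto simp: extend_by_zero_def PiE_iff extensional_def)
      qed
    qed
  qed
  show "\<forall>z\<in>interior_generators k n Y. restrict_to_support (extend_by_zero z) = z"
    by (auto simp: interior_generators_eq_with_full_support mem_generators_with_support_iff
        restrict_to_support_def extend_by_zero_enumeration PiE_iff extensional_def)
qed (auto intro: restrict_mem_interior_generators extend_mem_generators_with_support)

end

definition reindex_sample ::
    "nat \<Rightarrow> nat \<Rightarrow> (nat \<Rightarrow> nat) \<Rightarrow> (nat \<Rightarrow> nat \<Rightarrow> real) \<Rightarrow> nat \<Rightarrow> nat \<Rightarrow> real" where
  "reindex_sample n k e X = (\<lambda>i\<in>{0..<n}. \<lambda>l\<in>{0..<k}. X i (e l))"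

lemma
  assumes "inj_on e {0..<k}" "e \<in> {0..<k} \<rightarrow> {0..<d}"
  shows measurable_reindex_sample:
      "reindex_sample n k e \<in> sample_measure d n \<rightarrow>\<^sub>M sample_measure k n"
    and distr_reindex_sample:
      "distr (sample_measure d n) (sample_measure k n) (reindex_sample n k e) = sample_measure k n"
proof -
  let ?r = "\<lambda>x. \<lambda>l\<in>{0..<k}. x (e l)"
  have r: "?r \<in> obs_measure d \<rightarrow>\<^sub>M obs_measure k"
    unfolding obs_measure_def
    by (intro measurable_restrict measurable_component_singleton) (use assms(2) in auto)
  have "reindex_sample n k e = compose {0..<n} ?r"
    by (auto simp: reindex_sample_def compose_def fun_eq_iff)
  moreover have "compose {0..<n} ?r \<in> sample_measure d n \<rightarrow>\<^sub>M sample_measure k n"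
    unfolding sample_measure_def compose_def
    by (intro measurable_restrict, rule measurable_compose[OF _ r])
      (auto intro: measurable_component_singleton)
  moreover have "distr (obs_measure d) (obs_measure k) ?r = obs_measure k"
    unfolding obs_measure_def
    using distr_PiM_reindex[of "{0..<d}" "\<lambda>_. uniform_measure lborel {0..<1::real}" e "{0..<k}",
        OF prob_space_uniform_unit_interval assms]
    by simp
  then have "distr (sample_measure d n) (sample_measure k n) (compose {0..<n} ?r) = sample_measure k n"
    unfolding sample_measure_def
    by (subst distr_PiM_finite_prob_space') (auto intro: prob_space_obs_measure r)
  ultimately show "reindex_sample n k e \<in> sample_measure d n \<rightarrow>\<^sub>M sample_measure k n"
    "distr (sample_measure d n) (sample_measure k n) (reindex_sample n k e) = sample_measure k n"
    by simp_all
qed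

lemma integral_card_generators_with_support:
  assumes K: "K \<subseteq> {0..<d}"
  shows "(\<integral>X. real (card (generators_with_support d n X K)) \<partial>sample_measure d n)
    = expected_interior_generators (card K) n"
proof -
  define k where "k = card K"
  obtain e where e: "bij_betw e {0..<k} K"
    using finite_subset[OF K] ex_bij_betw_nat_finite unfolding k_def by blast
  then have e_inj: "inj_on e {0..<k}" and e_into: "e \<in> {0..<k} \<rightarrow> {0..<d}"
    using K by (auto simp: bij_betw_def)
  let ?Y = "reindex_sample n k e"
  have card_interior[measurable]:
    "(\<lambda>Z. real (card (interior_generators k n Z))) \<in> borel_measurable (sample_measure k n)"
    unfolding interior_generators_eq_with_full_support
    by (rule borel_measurable_card_generators_with_support)
  have "AE X in sample_measure d n. real (card (generators_with_support d n X K))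
      = real (card (interior_generators k n (?Y X)))"
    using AE_sample_positive
  proof (rule AE_mp, intro AE_I2 impI)
    fix X :: "nat \<Rightarrow> nat \<Rightarrow> real" assume "\<forall>i<n. \<forall>j<d. 0 < X i j"
    then interpret support_projection d n k K e X "?Y X"
      using e K by unfold_locales (auto simp: reindex_sample_def)
    show "real (card (generators_with_support d n X K)) = real (card (interior_generators k n (?Y X)))"
      using bij_betw_restrict_to_support by (simp add: bij_betw_same_card)
  qed
  then have "(\<integral>X. real (card (generators_with_support d n X K)) \<partial>sample_measure d n)
      = (\<integral>X. real (card (interior_generators k n (?Y X))) \<partial>sample_measure d n)"
    by (intro integral_cong_AE borel_measurable_card_generators_with_support
        measurable_compose[OF measurable_reindex_sample[OF e_inj e_into] card_interior])
  also have "\<dots> = (\<integral>Z. real (card (interior_generators k n Z))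
      \<partial>distr (sample_measure d n) (sample_measure k n) ?Y)"
    by (rule integral_distr[symmetric, OF measurable_reindex_sample[OF e_inj e_into] card_interior])
  also have "\<dots> = expected_interior_generators k n"
    unfolding distr_reindex_sample[OF e_inj e_into] expected_interior_generators_def ..
  finally show ?thesis
    unfolding k_def .
qed

lemma expected_interior_generators_0:
  "expected_interior_generators 0 n = (if n = 0 then 1 else 0)"
proof -
  interpret prob_space "sample_measure 0 n"
    by (rule prob_space_sample_measure)
  have "unit_cube 0 = {\<lambda>_. undefined}"
    by (simp add: unit_cube_def)
  then have "interior_generators 0 n X = (if n = 0 then {\<lambda>_. undefined} else {})" for X
    by (auto simp: interior_generators_def generators_def record_region_def strict_dom_def
        weak_dom_def)
  then show ?thesis
    by (simp add: expected_interior_generators_def prob_space)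
qed

lemma expected_generators_eq_sum_supports:
  "expected_generators d n = (\<Sum>K\<in>Pow {0..<d}. expected_interior_generators (card K) n)"
proof -
  have "expected_generators d n
      = (\<integral>X. (\<Sum>K\<in>Pow {0..<d}. real (card (generators_with_support d n X K))) \<partial>sample_measure d n)"
    unfolding expected_generators_def card_generators_eq_sum_with_support[OF finite_generators]
    by simp
  also have "\<dots> = (\<Sum>K\<in>Pow {0..<d}. \<integral>X. real (card (generators_with_support d n X K)) \<partial>sample_measure d n)"
    by (rule Bochner_Integration.integral_sum) (rule integrable_card_generators_with_support)
  also have "\<dots> = (\<Sum>K\<in>Pow {0..<d}. expected_interior_generators (card K) n)"
    by (rule sum.cong) (auto intro: integral_card_generators_with_support)
  finally show ?thesis .
qed

lemma sum_Pow_card: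
  fixes f :: "nat \<Rightarrow> 'a::comm_semiring_1"
  assumes "finite A"
  shows "(\<Sum>K\<in>Pow A. f (card K)) = (\<Sum>k=0..card A. of_nat (card A choose k) * f k)"
proof -
  have "(\<Sum>K\<in>Pow A. f (card K)) = (\<Sum>k=0..card A. \<Sum>K\<in>{K\<in>Pow A. card K = k}. f (card K))"
    using assms by (intro sum.group[symmetric]) (auto intro: card_mono)
  also have "\<dots> = (\<Sum>k=0..card A. of_nat (card A choose k) * f k)"
    using n_subsets[OF assms] by (intro sum.cong) (auto simp: Pow_def conj_commute)
  finally show ?thesis .
qed

theorem lemmaL:
  fixes d n :: nat
  shows "expected_interior_generators 0 n = (if n = 0 then 1 else 0)
     \<and> expected_generators d n =
         (\<Sum>k=0..d. real (d choose k) * expected_interior_generators k n)"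
  using expected_interior_generators_0 expected_generators_eq_sum_supports
    sum_Pow_card[of "{0..<d}" "\<lambda>k. expected_interior_generators k n"]
  by simp

end
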